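(* Let $n\ge2$, let $r_1,r_2>0$ and let $u,v\in S^{n-1}$ be such that $u$ is not parallel to $v$. Then $C^{-}(u,r_1)\cap C^{-}(v,r_2)\in\mathcal{C}_e^n$.
   Context: For $x,y\in\mathbb{R}^n$ let $[x,y]=\sqrt{|x|^2|y|^2-(x\cdot y)^2}$. For $u\in S^{n-1}$ and $r>0$, the closed solid cylinder with axis $\{tu:t\in\mathbb{R}\}$ and base radius $r$ is $C^{-}(u,r)=\{x\in\mathbb{R}^n: [x,u]\le r\}$. A convex body is a compact convex set with nonempty interior. $\mathcal{C}_e^n$ denotes the class of origin-symmetric convex bodies in $\mathbb{R}^n$ that are intersections of (a family of) closed solid cylinders $C^{-}(u,r)$, $u\in S^{n-1}$, $r>0$. *)

theory Defs
  imports "HOL-Analysis.Analysis"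
begin

definition bracket :: "real^'n \<Rightarrow> real^'n \<Rightarrow> real" where
  "bracket x y = sqrt ((norm x)\<^sup>2 * (norm y)\<^sup>2 - (x \<bullet> y)\<^sup>2)"

definition cyl :: "real^'n \<Rightarrow> real \<Rightarrow> (real^'n) set" where
  "cyl u r = {x. bracket x u \<le> r}"

definition convex_body :: "(real^'n) set \<Rightarrow> bool" where
  "convex_body K \<longleftrightarrow> compact K \<and> convex K \<and> interior K \<noteq> {}"

definition origin_symmetric :: "(real^'n) set \<Rightarrow> bool" where
  "origin_symmetric K \<longleftrightarrow> (\<forall>x\<in>K. - x \<in> K)"

definition cyl_class :: "(real^'n) set set" where
  "cyl_class = {K. convex_body K \<and> origin_symmetric K \<and>
     (\<exists>F. F \<subseteq> {(u, r). norm u = 1 \<and> r > 0} \<and> K = (\<Inter>(u, r)\<in>F. cyl u r))}"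

end

theory Submission
  imports Defs
begin

text \<open>For a unit vector \<open>u\<close>, \<open>[x,u]\<close> is the distance from \<open>x\<close> to the axis of \<open>u\<close>, so
  \<open>C\<^sup>-(u,r)\<close> is the preimage of a ball under the linear map \<open>x \<mapsto> x - (x\<bullet>u) u\<close>; hence it is
  closed, convex, origin-symmetric and contains \<open>cball 0 r\<close>. Boundedness of the intersection of two
  such cylinders comes from non-parallelism: with \<open>a = x\<bullet>u\<close>, \<open>b = x\<bullet>v\<close>, the vector \<open>a u - b v\<close> is
  the difference of the two axis offsets of \<open>x\<close>, so its norm is at most \<open>r\<^sub>1 + r\<^sub>2\<close>, while
  \<open>|a u - b v|\<^sup>2 \<ge> (1 - |u\<bullet>v|)(a\<^sup>2 + b\<^sup>2)\<close> with \<open>|u\<bullet>v| < 1\<close>.\<close>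

lemma bracket_unit_eq_norm:
  fixes x u :: "real^'n"
  assumes "norm u = 1"
  shows "bracket x u = norm (x - (x \<bullet> u) *\<^sub>R u)"
proof -
  have uu: "u \<bullet> u = 1" using assms by (simp add: norm_eq_1)
  have "(norm (x - (x \<bullet> u) *\<^sub>R u))\<^sup>2 = (norm x)\<^sup>2 * (norm u)\<^sup>2 - (x \<bullet> u)\<^sup>2"
    unfolding power2_norm_eq_inner
    by (simp add: inner_diff_left inner_diff_right uu inner_commute power2_eq_square)
  then show ?thesis unfolding bracket_def by (metis norm_ge_zero real_sqrt_unique)
qed

lemma cyl_eq_vimage_cball:
  fixes u :: "real^'n"
  assumes "norm u = 1"
  shows "cyl u r = (\<lambda>x. x - (x \<bullet> u) *\<^sub>R u) -` cball 0 r"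
  unfolding cyl_def using bracket_unit_eq_norm[OF assms] by auto

lemma linear_axis_offset: "linear (\<lambda>x. x - (x \<bullet> u) *\<^sub>R u)"
  by (auto simp: linear_iff inner_add_left algebra_simps)

lemma convex_cyl:
  fixes u :: "real^'n"
  assumes "norm u = 1"
  shows "convex (cyl u r)"
  unfolding cyl_eq_vimage_cball[OF assms]
  by (rule convex_linear_vimage[OF linear_axis_offset convex_cball])

lemma closed_cyl:
  fixes u :: "real^'n"
  assumes "norm u = 1"
  shows "closed (cyl u r)"
  unfolding cyl_eq_vimage_cball[OF assms]
  by (intro closed_vimage closed_cball continuous_intros)

lemma uminus_in_cyl:
  fixes u :: "real^'n"
  assumes "norm u = 1" "x \<in> cyl u r"
  shows "- x \<in> cyl u r"
  using assms linear_neg[OF linear_axis_offset, of u x]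
  unfolding cyl_eq_vimage_cball[OF assms(1)] by (simp add: norm_minus_commute)

lemma cball_subset_cyl:
  fixes u :: "real^'n"
  assumes "norm u = 1"
  shows "cball 0 r \<subseteq> cyl u r"
proof
  fix x :: "real^'n" assume "x \<in> cball 0 r"
  have "bracket x u \<le> sqrt ((norm x)\<^sup>2)"
    unfolding bracket_def using assms by (intro real_sqrt_le_mono) simp
  then show "x \<in> cyl u r" using \<open>x \<in> cball 0 r\<close> unfolding cyl_def by simp
qed

lemma abs_inner_less_one:
  fixes u v :: "real^'n"
  assumes "norm u = 1" "norm v = 1" "v \<noteq> u" "v \<noteq> - u"
  shows "\<bar>u \<bullet> v\<bar> < 1"
proof -
  have "\<bar>u \<bullet> v\<bar> \<le> 1" using Cauchy_Schwarz_ineq2[of u v] assms by simp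
  moreover have "\<bar>u \<bullet> v\<bar> \<noteq> norm u * norm v"
  proof
    assume "\<bar>u \<bullet> v\<bar> = norm u * norm v"
    then have "v = u \<or> v = - u"
      using norm_cauchy_schwarz_abs_eq[of u v] assms by simp
    then show False using assms by blast
  qed
  ultimately show ?thesis using assms by simp
qed

lemma norm_diff_scaleR_unit_ge:
  fixes u v :: "'a::real_inner"
  assumes "norm u = 1" "norm v = 1"
  shows "(1 - \<bar>u \<bullet> v\<bar>) * (a\<^sup>2 + b\<^sup>2) \<le> (norm (a *\<^sub>R u - b *\<^sub>R v))\<^sup>2"
proof -
  define c where "c = u \<bullet> v"
  have "(norm (a *\<^sub>R u - b *\<^sub>R v))\<^sup>2 = a\<^sup>2 + b\<^sup>2 - 2 * a * b * c"
    using assms unfolding power2_norm_eq_inner c_def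
    by (simp add: inner_diff_left inner_diff_right norm_eq_1 inner_commute power2_eq_square
        algebra_simps)
  moreover have "2 * a * b * c \<le> (a\<^sup>2 + b\<^sup>2) * \<bar>c\<bar>"
  proof -
    have "2 * a * b * c \<le> (2 * \<bar>a\<bar> * \<bar>b\<bar>) * \<bar>c\<bar>"
      by (metis abs_ge_self abs_mult abs_numeral)
    also have "\<dots> \<le> (a\<^sup>2 + b\<^sup>2) * \<bar>c\<bar>"
      using sum_squares_bound[of "\<bar>a\<bar>" "\<bar>b\<bar>"] by (intro mult_right_mono) simp_all
    finally show ?thesis .
  qed
  ultimately show ?thesis unfolding c_def by (simp add: algebra_simps)
qed

lemma bounded_cyl_Int_cyl:
  fixes u v :: "real^'n"
  assumes "norm u = 1" "norm v = 1" "\<bar>u \<bullet> v\<bar> < 1"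
  shows "bounded (cyl u r1 \<inter> cyl v r2)"
proof -
  define M where "M = sqrt ((r1 + r2)\<^sup>2 / (1 - \<bar>u \<bullet> v\<bar>))"
  have "cyl u r1 \<inter> cyl v r2 \<subseteq> cball 0 (r1 + M)"
  proof
    fix x assume x: "x \<in> cyl u r1 \<inter> cyl v r2"
    define a where "a = x \<bullet> u"
    define b where "b = x \<bullet> v"
    have off_u: "norm (x - a *\<^sub>R u) \<le> r1" and off_v: "norm (x - b *\<^sub>R v) \<le> r2"
      using x unfolding a_def b_def cyl_eq_vimage_cball[OF assms(1)]
        cyl_eq_vimage_cball[OF assms(2)] by auto
    have "norm (a *\<^sub>R u - b *\<^sub>R v) \<le> r1 + r2"
      using norm_triangle_ineq4[of "x - b *\<^sub>R v" "x - a *\<^sub>R u"] off_u off_v by simp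
    then have "(norm (a *\<^sub>R u - b *\<^sub>R v))\<^sup>2 \<le> (r1 + r2)\<^sup>2"
      by (rule power_mono[OF _ norm_ge_zero])
    with norm_diff_scaleR_unit_ge[OF assms(1,2)]
    have "(1 - \<bar>u \<bullet> v\<bar>) * (a\<^sup>2 + b\<^sup>2) \<le> (r1 + r2)\<^sup>2"
      by (rule order_trans)
    moreover have "(1 - \<bar>u \<bullet> v\<bar>) * a\<^sup>2 \<le> (1 - \<bar>u \<bullet> v\<bar>) * (a\<^sup>2 + b\<^sup>2)"
      using assms(3) by (intro mult_left_mono) auto
    ultimately have "(1 - \<bar>u \<bullet> v\<bar>) * a\<^sup>2 \<le> (r1 + r2)\<^sup>2"
      by (meson order_trans)
    then have "a\<^sup>2 \<le> (r1 + r2)\<^sup>2 / (1 - \<bar>u \<bullet> v\<bar>)"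
      using assms(3) by (metis diff_gt_0_iff_gt mult.commute pos_le_divide_eq)
    then have "\<bar>a\<bar> \<le> M"
      unfolding M_def by (metis real_sqrt_abs real_sqrt_le_mono)
    then have "norm x \<le> r1 + M"
      using off_u assms(1) norm_triangle_sub[of x "a *\<^sub>R u"] by simp
    then show "x \<in> cball 0 (r1 + M)" by simp
  qed
  then show ?thesis by (rule bounded_subset[OF bounded_cball])
qed

theorem proposition3p2:
  fixes u v :: "real^'n" and r1 r2 :: real
  assumes "CARD('n) \<ge> 2"
    and "r1 > 0" and "r2 > 0"
    and "norm u = 1" and "norm v = 1"
    and "v \<noteq> u" and "v \<noteq> - u"
  shows "cyl u r1 \<inter> cyl v r2 \<in> cyl_class"
proof -
  let ?K = "cyl u r1 \<inter> cyl v r2"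
  have "compact ?K"
    using bounded_cyl_Int_cyl[OF assms(4,5) abs_inner_less_one[OF assms(4-7)]]
      closed_cyl[OF assms(4)] closed_cyl[OF assms(5)]
    by (simp add: compact_eq_bounded_closed closed_Int)
  moreover have "convex ?K"
    using convex_cyl[OF assms(4)] convex_cyl[OF assms(5)] by (rule convex_Int)
  moreover have "interior ?K \<noteq> {}"
  proof -
    have "ball 0 (min r1 r2) \<subseteq> ?K"
      using cball_subset_cyl[OF assms(4), of r1] cball_subset_cyl[OF assms(5), of r2] by auto
    then have "0 \<in> interior ?K"
      using assms(2,3) mem_interior by (metis min_less_iff_conj)
    then show ?thesis by blast
  qed
  moreover have "origin_symmetric ?K"
    unfolding origin_symmetric_def using uminus_in_cyl[OF assms(4)] uminus_in_cyl[OF assms(5)] by blast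
  moreover have "{(u, r1), (v, r2)} \<subseteq> {(w, r). norm w = 1 \<and> r > 0}"
    using assms(2-5) by auto
  moreover have "?K = (\<Inter>(w, r)\<in>{(u, r1), (v, r2)}. cyl w r)" by auto
  ultimately show ?thesis
    unfolding cyl_class_def convex_body_def by (intro CollectI conjI exI) assumption+
qed

end
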